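(* For each $n$ let $N_n=(N_{n,1},\ldots,N_{n,M_n})$ be multinomially distributed with parameters $(n,p_{n,1},\ldots,p_{n,M_n})$, where $\max_m p_{n,m}\to0$ as $n\to\infty$ and $\liminf_{n\to\infty}n\min_m p_{n,m}>0$. For given real numbers $\alpha_{n,m}$ let $$s_n^2=\frac2{n^2}\sum_m\frac{\alpha_{n,m}^2}{p_{n,m}^2}+\frac4n\sum_m p_{n,m}\Big(\frac{\alpha_{n,m}}{p_{n,m}}-\sum_{m'}\alpha_{n,m'}\Big)^2 .$$ Then $$\sum_m\alpha_{n,m}\Big(\frac{N_{n,m}(N_{n,m}-1)}{n(n-1)p_{n,m}^2}-1\Big)=O_P\Big(s_n+\frac{\sum_m|\alpha_{n,m}|}{\sqrt n}\Big).$$ *)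

theory Defs
  imports "HOL-Probability.Probability"
begin

definition categorical_pmf :: "nat \<Rightarrow> (nat \<Rightarrow> real) \<Rightarrow> nat pmf" where
  "categorical_pmf M p = embed_pmf (\<lambda>m. if m < M then p m else 0)"

primrec multinomial_pmf :: "nat \<Rightarrow> nat \<Rightarrow> (nat \<Rightarrow> real) \<Rightarrow> (nat \<Rightarrow> nat) pmf" where
  "multinomial_pmf 0 M p = return_pmf (\<lambda>_. 0)"
| "multinomial_pmf (Suc n) M p =
     bind_pmf (multinomial_pmf n M p) (\<lambda>N.
       map_pmf (\<lambda>m. N(m := Suc (N m))) (categorical_pmf M p))"

definition bigO_P :: "(nat \<Rightarrow> 'a pmf) \<Rightarrow> (nat \<Rightarrow> 'a \<Rightarrow> real) \<Rightarrow> (nat \<Rightarrow> real) \<Rightarrow> bool" where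
  "bigO_P D X r \<longleftrightarrow> (\<forall>\<epsilon>>0. \<exists>C. \<forall>\<^sub>F n in sequentially.
      measure_pmf.prob (D n) {x. \<bar>X n x\<bar> > C * r n} < \<epsilon>)"

end

theory Submission
  imports Defs
begin

text \<open>Write N^(a) = N (N - 1) ... (N - a + 1) for falling factorials. Adding one categorical
  draw at a time, induction on n gives the factorial moments E[N_m^(a) N_k^(b)] = n^(a+b) p_m^a p_k^b
  for m \<noteq> k. They show that the statistic is centred and give its second moment in closed form,
  which for n \<ge> 2 and positive cell probabilities is at most 2 s_n^2. Chebyshev's inequality then
  gives the O_P bound.\<close>

lemma pmf_categorical_pmf:
  assumes "\<And>m. m < M \<Longrightarrow> p m \<ge> 0" and "(\<Sum>m<M. p m) = 1"
  shows "pmf (categorical_pmf M p) x = (if x < M then p x else 0)"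
  unfolding categorical_pmf_def
proof (rule pmf_embed_pmf)
  show "\<And>x. 0 \<le> (if x < M then p x else 0)" using assms(1) by auto
  have "(\<integral>\<^sup>+x. ennreal (if x < M then p x else 0) \<partial>count_space UNIV)
      = (\<Sum>x<M. ennreal (p x))"
    by (subst nn_integral_count_space'[of "{..<M}"]) auto
  also have "\<dots> = 1"
    using assms by (subst sum_ennreal) auto
  finally show "(\<integral>\<^sup>+x. ennreal (if x < M then p x else 0) \<partial>count_space UNIV) = 1" .
qed

lemma set_pmf_categorical_pmf:
  assumes "\<And>m. m < M \<Longrightarrow> p m \<ge> 0" and "(\<Sum>m<M. p m) = 1"
  shows "set_pmf (categorical_pmf M p) \<subseteq> {..<M}"
  using pmf_categorical_pmf[OF assms] by (auto simp: set_pmf_eq)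

lemma expectation_categorical_pmf:
  fixes h :: "nat \<Rightarrow> real"
  assumes "\<And>m. m < M \<Longrightarrow> p m \<ge> 0" and "(\<Sum>m<M. p m) = 1"
  shows "measure_pmf.expectation (categorical_pmf M p) h = (\<Sum>m<M. p m * h m)"
  using set_pmf_categorical_pmf[OF assms] pmf_categorical_pmf[OF assms]
  by (subst integral_measure_pmf_real[of "{..<M}"]) (auto simp: mult.commute)

lemma finite_set_pmf_multinomial_pmf:
  assumes "\<And>m. m < M \<Longrightarrow> p m \<ge> 0" and "(\<Sum>m<M. p m) = 1"
  shows "finite (set_pmf (multinomial_pmf n M p))"
proof (induction n)
  case (Suc n)
  have "finite (set_pmf (categorical_pmf M p))"
    using set_pmf_categorical_pmf[OF assms] finite_subset by blast
  with Suc show ?case by (simp add: set_bind_pmf)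
qed simp

lemma expectation_multinomial_pmf_Suc:
  fixes h :: "(nat \<Rightarrow> nat) \<Rightarrow> real"
  assumes "\<And>m. m < M \<Longrightarrow> p m \<ge> 0" and "(\<Sum>m<M. p m) = 1"
  shows "measure_pmf.expectation (multinomial_pmf (Suc n) M p) h
    = measure_pmf.expectation (multinomial_pmf n M p) (\<lambda>N. \<Sum>m<M. p m * h (N(m := Suc (N m))))"
proof -
  let ?A = "set_pmf (multinomial_pmf n M p)"
  have fin: "finite ?A" by (rule finite_set_pmf_multinomial_pmf[OF assms])
  have "finite (set_pmf (categorical_pmf M p))"
    using set_pmf_categorical_pmf[OF assms] finite_subset by blast
  then have "measure_pmf.expectation (multinomial_pmf (Suc n) M p) h
     = (\<Sum>N\<in>?A. pmf (multinomial_pmf n M p) N *\<^sub>R measure_pmf.expectation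
          (map_pmf (\<lambda>m. N(m := Suc (N m))) (categorical_pmf M p)) h)"
    by (simp only: multinomial_pmf.simps, intro pmf_expectation_bind[OF fin]) auto
  also have "\<dots> = (\<Sum>N\<in>?A. (\<Sum>m<M. p m * h (N(m := Suc (N m)))) * pmf (multinomial_pmf n M p) N)"
    by (simp add: expectation_categorical_pmf[OF assms] mult.commute)
  also have "\<dots> = measure_pmf.expectation (multinomial_pmf n M p)
                    (\<lambda>N. \<Sum>m<M. p m * h (N(m := Suc (N m))))"
    by (rule integral_measure_pmf_real[symmetric, OF fin]) auto
  finally show ?thesis .
qed

definition ffact :: "nat \<Rightarrow> 'a :: comm_ring_1 \<Rightarrow> 'a" where
  "ffact k x = (\<Prod>i<k. x - of_nat i)"

lemma ffact_0 [simp]: "ffact 0 x = 1"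
  by (simp add: ffact_def)

lemma ffact_Suc: "ffact (Suc k) x = ffact k x * (x - of_nat k)"
  by (simp add: ffact_def)

lemma ffact_of_0: "ffact k 0 = (if k = 0 then 1 else 0)"
  by (induction k) (simp_all add: ffact_Suc)

lemma ffact_plus_1: "ffact k (x + 1) = ffact k x + of_nat k * ffact (k - 1) x"
proof (induction k)
  case (Suc k)
  show ?case
  proof (cases k)
    case (Suc j)
    have "ffact (Suc k) (x + 1) = (ffact k x + of_nat k * ffact j x) * (x + 1 - of_nat k)"
      using Suc.IH Suc by (simp add: ffact_Suc)
    also have "\<dots> = ffact k x * (x - of_nat k) + ffact k x + of_nat k * (ffact j x * (x - of_nat j))"
      using Suc by (simp add: algebra_simps)
    also have "\<dots> = ffact (Suc k) x + of_nat (Suc k) * ffact k x"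
      using Suc by (simp add: ffact_Suc algebra_simps)
    finally show ?thesis by simp
  qed (simp add: ffact_Suc)
qed simp

lemma ffact_numeral_expand:
  "ffact 2 x = x * (x - 1)" "ffact 3 x = x * (x - 1) * (x - 2)"
  "ffact 4 x = x * (x - 1) * (x - 2) * (x - 3)"
  by (simp_all add: ffact_def numeral_eq_Suc lessThan_Suc)

lemma ffact_2_of_nat: "ffact 2 (of_nat a) = (of_nat (a * (a - 1)) :: 'a :: comm_ring_1)"
  by (cases a) (simp_all add: ffact_numeral_expand algebra_simps)

lemma ffact_2_squared: "ffact 2 x * ffact 2 x = ffact 4 x + 4 * ffact 3 x + 2 * ffact 2 x"
  by (simp add: ffact_numeral_expand algebra_simps)

lemma sum_increment_ffact_ffact:
  fixes p :: "nat \<Rightarrow> real"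
  assumes "(\<Sum>j<M. p j) = 1" and "m < M" and "k < M \<or> b = 0" and "m \<noteq> k"
  shows "(\<Sum>j<M. p j * (ffact a (real ((N(j := Suc (N j))) m)) * ffact b (real ((N(j := Suc (N j))) k))))
    = ffact a (real (N m)) * ffact b (real (N k))
      + p m * (real a * ffact (a - 1) (real (N m)) * ffact b (real (N k)))
      + p k * (real b * ffact a (real (N m)) * ffact (b - 1) (real (N k)))"
    (is "(\<Sum>j<M. p j * ?h j) = ?H + p m * ?D1 + p k * ?D2")
proof -
  have "?h j = ?H + (if j = m then ?D1 else 0) + (if j = k then ?D2 else 0)" for j
    using ffact_plus_1[of a "real (N m)"] ffact_plus_1[of b "real (N k)"] \<open>m \<noteq> k\<close>
    by (auto simp: algebra_simps)
  then have "(\<Sum>j<M. p j * ?h j)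
      = (\<Sum>j<M. p j * ?H + (if j = m then p j * ?D1 else 0) + (if j = k then p j * ?D2 else 0))"
    by (intro sum.cong) (simp_all add: algebra_simps)
  also have "\<dots> = ?H + p m * ?D1 + (if k < M then p k * ?D2 else 0)"
    using assms(1,2) by (simp add: sum.distrib sum_distrib_right[symmetric])
  finally show ?thesis
    using assms(3) by auto
qed

lemma expectation_multinomial_ffact_ffact:
  assumes nonneg: "\<And>m. m < M \<Longrightarrow> p m \<ge> 0" and sum1: "(\<Sum>m<M. p m) = 1"
    and "m < M" and "k < M \<or> b = 0" and "m \<noteq> k"
  shows "measure_pmf.expectation (multinomial_pmf n M p)
           (\<lambda>N. ffact a (real (N m)) * ffact b (real (N k)))
         = ffact (a + b) (real n) * p m ^ a * p k ^ b"
  using \<open>k < M \<or> b = 0\<close>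
proof (induction n arbitrary: a b)
  case 0
  then show ?case by (simp add: ffact_of_0)
next
  case (Suc n)
  let ?E = "measure_pmf.expectation (multinomial_pmf n M p)"
  have int: "integrable (measure_pmf (multinomial_pmf n M p)) f" for f :: "_ \<Rightarrow> real"
    by (rule integrable_measure_pmf_finite[OF finite_set_pmf_multinomial_pmf[OF nonneg sum1]])
  have IH_a: "p m * ?E (\<lambda>N. real a * ffact (a - 1) (real (N m)) * ffact b (real (N k)))
      = real a * ffact (a + b - 1) (real n) * p m ^ a * p k ^ b"
    using Suc.IH[of b "a - 1"] Suc.prems by (cases a) (simp_all add: mult.assoc mult.left_commute)
  have IH_b: "p k * ?E (\<lambda>N. real b * ffact a (real (N m)) * ffact (b - 1) (real (N k)))
      = real b * ffact (a + b - 1) (real n) * p m ^ a * p k ^ b"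
    using Suc.IH[of "b - 1" a] Suc.prems by (cases b) (auto simp: mult.assoc mult.left_commute)
  have "measure_pmf.expectation (multinomial_pmf (Suc n) M p)
          (\<lambda>N. ffact a (real (N m)) * ffact b (real (N k)))
      = ?E (\<lambda>N. ffact a (real (N m)) * ffact b (real (N k))
          + p m * (real a * ffact (a - 1) (real (N m)) * ffact b (real (N k)))
          + p k * (real b * ffact a (real (N m)) * ffact (b - 1) (real (N k))))"
    by (simp only: expectation_multinomial_pmf_Suc[OF nonneg sum1]
        sum_increment_ffact_ffact[OF sum1 \<open>m < M\<close> Suc.prems \<open>m \<noteq> k\<close>])
  also have "\<dots> = ffact (a + b) (real n) * p m ^ a * p k ^ b
      + real a * ffact (a + b - 1) (real n) * p m ^ a * p k ^ b
      + real b * ffact (a + b - 1) (real n) * p m ^ a * p k ^ b"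
    using Suc.IH[of b a] Suc.prems IH_a IH_b by (simp add: int)
  also have "\<dots> = ffact (a + b) (real (Suc n)) * p m ^ a * p k ^ b"
    using ffact_plus_1[of "a + b" "real n"] by (simp add: algebra_simps)
  finally show ?case .
qed

lemma expectation_multinomial_ffact:
  assumes "\<And>m. m < M \<Longrightarrow> p m \<ge> 0" and "(\<Sum>m<M. p m) = 1" and "m < M"
  shows "measure_pmf.expectation (multinomial_pmf n M p) (\<lambda>N. ffact a (real (N m)))
    = ffact a (real n) * p m ^ a"
  using expectation_multinomial_ffact_ffact[OF assms, of "Suc m" 0 n a] by simp

lemma expectation_multinomial_ffact_2_mult:
  assumes nonneg: "\<And>m. m < M \<Longrightarrow> p m \<ge> 0" and sum1: "(\<Sum>m<M. p m) = 1"
    and "m < M" and "k < M"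
  shows "measure_pmf.expectation (multinomial_pmf n M p)
           (\<lambda>N. ffact 2 (real (N m)) * ffact 2 (real (N k)))
    = ffact 4 (real n) * (p m * p k)\<^sup>2
      + (if m = k then 4 * ffact 3 (real n) * p m ^ 3 + 2 * ffact 2 (real n) * (p m)\<^sup>2 else 0)"
proof (cases "m = k")
  case True
  have int: "integrable (measure_pmf (multinomial_pmf n M p)) f" for f :: "_ \<Rightarrow> real"
    by (rule integrable_measure_pmf_finite[OF finite_set_pmf_multinomial_pmf[OF nonneg sum1]])
  show ?thesis
    using True expectation_multinomial_ffact[OF nonneg sum1 \<open>m < M\<close>, of n]
    by (simp add: ffact_2_squared int power_mult_distrib flip: power_add)
next
  case False
  then show ?thesis
    using expectation_multinomial_ffact_ffact[OF nonneg sum1 \<open>m < M\<close> disjI1[OF \<open>k < M\<close>] False]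
    by (simp add: power_mult_distrib)
qed

lemma expectation_square_sum_centred:
  fixes W :: "'a \<Rightarrow> nat \<Rightarrow> real" and \<alpha> \<gamma> :: "nat \<Rightarrow> real"
  assumes fin: "finite (set_pmf D)"
    and EW: "\<And>m. m < M \<Longrightarrow> measure_pmf.expectation D (\<lambda>x. W x m) = 1"
    and EWW: "\<And>m k. m < M \<Longrightarrow> k < M \<Longrightarrow>
      measure_pmf.expectation D (\<lambda>x. W x m * W x k) = \<beta> + (if m = k then \<gamma> m else 0)"
  shows "measure_pmf.expectation D (\<lambda>x. (\<Sum>m<M. \<alpha> m * (W x m - 1))\<^sup>2)
    = (\<beta> - 1) * (\<Sum>m<M. \<alpha> m)\<^sup>2 + (\<Sum>m<M. (\<alpha> m)\<^sup>2 * \<gamma> m)"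
proof -
  let ?E = "measure_pmf.expectation D"
  have int: "integrable (measure_pmf D) f" for f :: "_ \<Rightarrow> real"
    by (rule integrable_measure_pmf_finite[OF fin])
  define A where "A = (\<Sum>m<M. \<alpha> m)"
  define Y where "Y = (\<lambda>x. \<Sum>m<M. \<alpha> m * W x m)"
  have centred: "(\<Sum>m<M. \<alpha> m * (W x m - 1)) = Y x - A" for x
    by (simp add: Y_def A_def right_diff_distrib sum_subtractf)
  have EY: "?E Y = A"
    by (simp add: Y_def A_def int EW)
  have "?E (\<lambda>x. (Y x)\<^sup>2) = ?E (\<lambda>x. \<Sum>m<M. \<Sum>k<M. \<alpha> m * \<alpha> k * (W x m * W x k))"
    by (simp add: Y_def power2_eq_square sum_product mult_ac)
  also have "\<dots> = (\<Sum>m<M. \<Sum>k<M. \<alpha> m * \<alpha> k * (\<beta> + (if m = k then \<gamma> m else 0)))"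
    by (simp add: int EWW)
  also have "\<dots> = \<beta> * A\<^sup>2 + (\<Sum>m<M. (\<alpha> m)\<^sup>2 * \<gamma> m)"
    by (simp add: A_def distrib_left sum.distrib power2_eq_square sum_product sum_distrib_left
        mult_ac if_distrib[of "(*) _"] cong: if_cong)
  finally have EY2: "?E (\<lambda>x. (Y x)\<^sup>2) = \<beta> * A\<^sup>2 + (\<Sum>m<M. (\<alpha> m)\<^sup>2 * \<gamma> m)" .
  have "?E (\<lambda>x. (Y x - A)\<^sup>2) = ?E (\<lambda>x. (Y x)\<^sup>2) - 2 * A * ?E Y + A\<^sup>2"
    unfolding power2_diff by (simp add: int)
  also have "\<dots> = (\<beta> - 1) * A\<^sup>2 + (\<Sum>m<M. (\<alpha> m)\<^sup>2 * \<gamma> m)"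
    unfolding EY EY2 by (simp add: power2_eq_square algebra_simps)
  finally show ?thesis
    by (simp only: centred A_def)
qed

lemma expectation_multinomial_ffact_2_normalized_mult:
  assumes nonneg: "\<And>m. m < M \<Longrightarrow> p m \<ge> 0" and sum1: "(\<Sum>m<M. p m) = 1"
    and pos: "\<And>m. m < M \<Longrightarrow> p m > 0" and "n \<ge> 2" and "m < M" and "k < M"
  defines "c \<equiv> real n * (real n - 1)"
  shows "measure_pmf.expectation (multinomial_pmf n M p)
      (\<lambda>N. ffact 2 (real (N m)) / (c * (p m)\<^sup>2) * (ffact 2 (real (N k)) / (c * (p k)\<^sup>2)))
    = (real n - 2) * (real n - 3) / c
      + (if m = k then 4 * (real n - 2) / (c * p m) + 2 / (c * (p m)\<^sup>2) else 0)"
proof -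
  have "c > 0"
    using \<open>n \<ge> 2\<close> by (simp add: c_def)
  have ffact_n: "ffact 2 (real n) = c" "ffact 3 (real n) = c * (real n - 2)"
      "ffact 4 (real n) = c * ((real n - 2) * (real n - 3))"
    by (simp_all add: c_def ffact_numeral_expand)
  have "measure_pmf.expectation (multinomial_pmf n M p)
      (\<lambda>N. ffact 2 (real (N m)) / (c * (p m)\<^sup>2) * (ffact 2 (real (N k)) / (c * (p k)\<^sup>2)))
    = measure_pmf.expectation (multinomial_pmf n M p)
        (\<lambda>N. ffact 2 (real (N m)) * ffact 2 (real (N k))) / (c\<^sup>2 * (p m * p k)\<^sup>2)"
    by (simp add: power_mult_distrib power2_eq_square field_simps)
  also have "\<dots> = (real n - 2) * (real n - 3) / c
      + (if m = k then 4 * (real n - 2) / (c * p m) + 2 / (c * (p m)\<^sup>2) else 0)"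
    using expectation_multinomial_ffact_2_mult[OF nonneg sum1 \<open>m < M\<close> \<open>k < M\<close>, of n]
      pos[OF \<open>m < M\<close>] pos[OF \<open>k < M\<close>] \<open>c > 0\<close>
    by (simp add: ffact_n field_simps power2_eq_square power3_eq_cube)
  finally show ?thesis .
qed

lemma expectation_multinomial_statistic_squared:
  fixes \<alpha> :: "nat \<Rightarrow> real"
  assumes nonneg: "\<And>m. m < M \<Longrightarrow> p m \<ge> 0" and sum1: "(\<Sum>m<M. p m) = 1"
    and pos: "\<And>m. m < M \<Longrightarrow> p m > 0" and "n \<ge> 2"
  shows "measure_pmf.expectation (multinomial_pmf n M p)
      (\<lambda>N. (\<Sum>m<M. \<alpha> m * (real (N m * (N m - 1)) / (real n * (real n - 1) * (p m)\<^sup>2) - 1))\<^sup>2)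
    = ((real n - 2) * (real n - 3) / (real n * (real n - 1)) - 1) * (\<Sum>m<M. \<alpha> m)\<^sup>2
      + 4 * (real n - 2) / (real n * (real n - 1)) * (\<Sum>m<M. (\<alpha> m)\<^sup>2 / p m)
      + 2 / (real n * (real n - 1)) * (\<Sum>m<M. (\<alpha> m)\<^sup>2 / (p m)\<^sup>2)"
proof -
  define c where "c = real n * (real n - 1)"
  define \<gamma> where "\<gamma> m = 4 * (real n - 2) / (c * p m) + 2 / (c * (p m)\<^sup>2)" for m
  have EW: "measure_pmf.expectation (multinomial_pmf n M p)
      (\<lambda>N. ffact 2 (real (N m)) / (c * (p m)\<^sup>2)) = 1" if "m < M" for m
    using expectation_multinomial_ffact[OF nonneg sum1 that, of n 2] pos[OF that] \<open>n \<ge> 2\<close>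
    by (simp add: c_def ffact_numeral_expand)
  have "(\<alpha> m)\<^sup>2 * \<gamma> m = 4 * (real n - 2) / c * ((\<alpha> m)\<^sup>2 / p m) + 2 / c * ((\<alpha> m)\<^sup>2 / (p m)\<^sup>2)" for m
    by (simp add: \<gamma>_def algebra_simps diff_divide_distrib divide_divide_eq_left mult.commute)
  then have "(\<Sum>m<M. (\<alpha> m)\<^sup>2 * \<gamma> m)
      = 4 * (real n - 2) / c * (\<Sum>m<M. (\<alpha> m)\<^sup>2 / p m) + 2 / c * (\<Sum>m<M. (\<alpha> m)\<^sup>2 / (p m)\<^sup>2)"
    by (simp only: sum.distrib sum_distrib_left)
  with expectation_square_sum_centred[OF finite_set_pmf_multinomial_pmf[OF nonneg sum1] EW
      expectation_multinomial_ffact_2_normalized_mult[OF nonneg sum1 pos \<open>n \<ge> 2\<close>, folded c_def],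
      where \<alpha> = \<alpha>]
  show ?thesis
    by (simp add: \<gamma>_def c_def ffact_2_of_nat add.assoc)
qed

lemma sum_weighted_square_deviation:
  fixes p \<alpha> :: "nat \<Rightarrow> real"
  assumes "\<And>m. m < M \<Longrightarrow> p m > 0" and "(\<Sum>m<M. p m) = 1"
  shows "(\<Sum>m<M. p m * (\<alpha> m / p m - (\<Sum>k<M. \<alpha> k))\<^sup>2) = (\<Sum>m<M. (\<alpha> m)\<^sup>2 / p m) - (\<Sum>m<M. \<alpha> m)\<^sup>2"
proof -
  let ?A = "\<Sum>k<M. \<alpha> k"
  have "(\<Sum>m<M. p m * (\<alpha> m / p m - ?A)\<^sup>2) = (\<Sum>m<M. (\<alpha> m)\<^sup>2 / p m - 2 * ?A * \<alpha> m + ?A\<^sup>2 * p m)"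
  proof (rule sum.cong[OF refl])
    fix m assume "m \<in> {..<M}"
    then have "p m \<noteq> 0" using assms(1) by force
    then show "p m * (\<alpha> m / p m - ?A)\<^sup>2 = (\<alpha> m)\<^sup>2 / p m - 2 * ?A * \<alpha> m + ?A\<^sup>2 * p m"
      by (simp add: field_simps power2_eq_square)
  qed
  also have "\<dots> = (\<Sum>m<M. (\<alpha> m)\<^sup>2 / p m) - 2 * ?A * ?A + ?A\<^sup>2 * (\<Sum>m<M. p m)"
    by (simp add: sum.distrib sum_subtractf sum_distrib_left)
  finally show ?thesis
    using assms(2) by (simp add: power2_eq_square)
qed

lemma multinomial_second_moment_coefficients_le:
  fixes x A2 V S2 :: real
  assumes "x \<ge> 2" and "A2 \<ge> 0" and "V \<ge> 0" and "S2 \<ge> 0"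
  shows "((x - 2) * (x - 3) / (x * (x - 1)) - 1) * A2 + 4 * (x - 2) / (x * (x - 1)) * (A2 + V)
      + 2 / (x * (x - 1)) * S2 \<le> 2 * (2 / x\<^sup>2 * S2 + 4 / x * V)"
proof -
  have "x * (x - 1) > 0" using assms(1) by simp
  have A2_coeff: "((x - 2) * (x - 3) / (x * (x - 1)) - 1) + 4 * (x - 2) / (x * (x - 1)) \<le> 0"
    using \<open>x * (x - 1) > 0\<close> by (simp add: divide_simps) (simp add: algebra_simps)
  have V_coeff: "4 * (x - 2) / (x * (x - 1)) \<le> 8 / x"
    using \<open>x * (x - 1) > 0\<close> assms(1) by (simp add: divide_simps)
  have S2_coeff: "2 / (x * (x - 1)) \<le> 4 / x\<^sup>2"
    using \<open>x * (x - 1) > 0\<close> assms(1) by (simp add: divide_simps power2_eq_square)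
  have "((x - 2) * (x - 3) / (x * (x - 1)) - 1) * A2 + 4 * (x - 2) / (x * (x - 1)) * (A2 + V)
      + 2 / (x * (x - 1)) * S2
      = (((x - 2) * (x - 3) / (x * (x - 1)) - 1) + 4 * (x - 2) / (x * (x - 1))) * A2
        + 4 * (x - 2) / (x * (x - 1)) * V + 2 / (x * (x - 1)) * S2"
    by (simp only: distrib_left distrib_right add_ac)
  also have "\<dots> \<le> 0 * A2 + 8 / x * V + 4 / x\<^sup>2 * S2"
    using A2_coeff V_coeff S2_coeff assms(2-4)
    by (intro add_mono mult_right_mono) auto
  finally show ?thesis
    by simp
qed

lemma expectation_multinomial_statistic_squared_le:
  fixes \<alpha> :: "nat \<Rightarrow> real"
  assumes nonneg: "\<And>m. m < M \<Longrightarrow> p m \<ge> 0" and sum1: "(\<Sum>m<M. p m) = 1"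
    and pos: "\<And>m. m < M \<Longrightarrow> p m > 0" and "n \<ge> 2"
  shows "measure_pmf.expectation (multinomial_pmf n M p)
      (\<lambda>N. (\<Sum>m<M. \<alpha> m * (real (N m * (N m - 1)) / (real n * (real n - 1) * (p m)\<^sup>2) - 1))\<^sup>2)
    \<le> 2 * (2 / (real n)\<^sup>2 * (\<Sum>m<M. (\<alpha> m)\<^sup>2 / (p m)\<^sup>2)
        + 4 / real n * (\<Sum>m<M. p m * (\<alpha> m / p m - (\<Sum>m'<M. \<alpha> m'))\<^sup>2))"
proof -
  define V where "V = (\<Sum>m<M. p m * (\<alpha> m / p m - (\<Sum>m'<M. \<alpha> m'))\<^sup>2)"
  have "V \<ge> 0"
    unfolding V_def using nonneg by (intro sum_nonneg) auto
  have "(\<Sum>m<M. (\<alpha> m)\<^sup>2 / p m) = (\<Sum>m<M. \<alpha> m)\<^sup>2 + V"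
    using sum_weighted_square_deviation[OF pos sum1, of \<alpha>] by (simp add: V_def)
  then have "measure_pmf.expectation (multinomial_pmf n M p)
      (\<lambda>N. (\<Sum>m<M. \<alpha> m * (real (N m * (N m - 1)) / (real n * (real n - 1) * (p m)\<^sup>2) - 1))\<^sup>2)
    = ((real n - 2) * (real n - 3) / (real n * (real n - 1)) - 1) * (\<Sum>m<M. \<alpha> m)\<^sup>2
      + 4 * (real n - 2) / (real n * (real n - 1)) * ((\<Sum>m<M. \<alpha> m)\<^sup>2 + V)
      + 2 / (real n * (real n - 1)) * (\<Sum>m<M. (\<alpha> m)\<^sup>2 / (p m)\<^sup>2)"
    by (simp only: expectation_multinomial_statistic_squared[OF nonneg sum1 pos \<open>n \<ge> 2\<close>])
  also have "\<dots> \<le> 2 * (2 / (real n)\<^sup>2 * (\<Sum>m<M. (\<alpha> m)\<^sup>2 / (p m)\<^sup>2) + 4 / real n * V)"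
    using \<open>n \<ge> 2\<close> \<open>V \<ge> 0\<close>
    by (intro multinomial_second_moment_coefficients_le) (auto intro: sum_nonneg)
  finally show ?thesis
    unfolding V_def .
qed

lemma prob_abs_gt_le_second_moment:
  fixes X :: "'a \<Rightarrow> real"
  assumes "integrable (measure_pmf D) (\<lambda>x. (X x)\<^sup>2)"
    and "measure_pmf.expectation D (\<lambda>x. (X x)\<^sup>2) \<le> K * r\<^sup>2" and "r \<ge> 0" and "K \<ge> 0" and "C > 0"
  shows "measure_pmf.prob D {x. \<bar>X x\<bar> > C * r} \<le> K / C\<^sup>2"
proof (cases "r = 0")
  case True
  have "measure_pmf.expectation D (\<lambda>x. (X x)\<^sup>2) = 0"
    using assms(2) True by (simp add: order_antisym)
  then have "AE x in measure_pmf D. (X x)\<^sup>2 = 0"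
    using integral_nonneg_eq_0_iff_AE[OF assms(1)] by simp
  then have "measure_pmf.prob D {x. \<bar>X x\<bar> > C * r} = 0"
    using True by (simp add: AE_measure_pmf_iff measure_pmf_zero_iff disjoint_iff)
  with assms(4) show ?thesis
    by simp
next
  case False
  with assms(3,5) have "C * r > 0" by simp
  have "measure_pmf.prob D {x. \<bar>X x\<bar> > C * r}
      \<le> measure_pmf.prob D {x \<in> space (measure_pmf D). (X x)\<^sup>2 \<ge> (C * r)\<^sup>2}"
    using \<open>C * r > 0\<close> by (intro measure_pmf.finite_measure_mono) (auto simp flip: abs_le_square_iff)
  also have "\<dots> \<le> measure_pmf.expectation D (\<lambda>x. (X x)\<^sup>2) / (C * r)\<^sup>2"
    using \<open>C * r > 0\<close> by (intro integral_Markov_inequality_measure[OF assms(1), of UNIV]) auto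
  also have "\<dots> \<le> K * r\<^sup>2 / (C * r)\<^sup>2"
    using assms(2) by (simp add: divide_right_mono)
  also have "\<dots> = K / C\<^sup>2"
    using False assms(5) by (simp add: power_mult_distrib)
  finally show ?thesis .
qed

lemma bigO_P_of_second_moment_bound:
  fixes X :: "nat \<Rightarrow> 'a \<Rightarrow> real"
  assumes "K \<ge> 0" and "\<And>n. finite (set_pmf (D n))" and "\<And>n. r n \<ge> 0"
    and "\<forall>\<^sub>F n in sequentially. measure_pmf.expectation (D n) (\<lambda>x. (X n x)\<^sup>2) \<le> K * (r n)\<^sup>2"
  shows "bigO_P D X r"
  unfolding bigO_P_def
proof (intro allI impI)
  fix \<epsilon> :: real
  assume "\<epsilon> > 0"
  define C where "C = sqrt (2 * (K + 1) / \<epsilon>)"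
  have "2 * (K + 1) / \<epsilon> > 0"
    using \<open>\<epsilon> > 0\<close> \<open>K \<ge> 0\<close> by simp
  then have "C > 0" and C_squared: "C\<^sup>2 = 2 * (K + 1) / \<epsilon>"
    by (simp_all add: C_def)
  have "K / C\<^sup>2 < \<epsilon>"
    using \<open>\<epsilon> > 0\<close> \<open>K \<ge> 0\<close> by (simp add: C_squared field_simps add_nonneg_pos)
  have "\<forall>\<^sub>F n in sequentially. measure_pmf.prob (D n) {x. \<bar>X n x\<bar> > C * r n} < \<epsilon>"
    using assms(4)
  proof eventually_elim
    case (elim n)
    have "measure_pmf.prob (D n) {x. \<bar>X n x\<bar> > C * r n} \<le> K / C\<^sup>2"
      using elim assms(3) \<open>K \<ge> 0\<close> \<open>C > 0\<close>
      by (intro prob_abs_gt_le_second_moment integrable_measure_pmf_finite assms(2))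
    with \<open>K / C\<^sup>2 < \<epsilon>\<close> show ?case
      by linarith
  qed
  then show "\<exists>C. \<forall>\<^sub>F n in sequentially. measure_pmf.prob (D n) {x. \<bar>X n x\<bar> > C * r n} < \<epsilon>"
    by blast
qed

lemma eventually_pos_of_liminf_mult_Min:
  fixes p :: "nat \<Rightarrow> nat \<Rightarrow> real"
  assumes "liminf (\<lambda>n. ereal (real n * Min {p n m | m. m < M n})) > 0"
  shows "\<forall>\<^sub>F n in sequentially. \<forall>m < M n. p n m > 0"
  using less_LiminfD[OF assms]
proof eventually_elim
  case (elim n)
  then have "Min {p n m | m. m < M n} > 0"
    by (simp add: zero_less_mult_iff)
  moreover have "Min {p n m | m. m < M n} \<le> p n m" if "m < M n" for m
    using that by (intro Min_le) auto
  ultimately show ?case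
    using order_less_le_trans by blast
qed

theorem lemma8:
  fixes M :: "nat \<Rightarrow> nat" and p :: "nat \<Rightarrow> nat \<Rightarrow> real" and \<alpha> :: "nat \<Rightarrow> nat \<Rightarrow> real"
    and s :: "nat \<Rightarrow> real"
  assumes p_nonneg: "\<And>n m. m < M n \<Longrightarrow> p n m \<ge> 0"
    and p_sum: "\<And>n. (\<Sum>m<M n. p n m) = 1"
    and max_p: "(\<lambda>n. Max {p n m | m. m < M n}) \<longlonglongrightarrow> 0"
    and min_p: "liminf (\<lambda>n. ereal (real n * Min {p n m | m. m < M n})) > 0"
    and s_def: "\<And>n. s n = sqrt (2 / (real n)\<^sup>2 * (\<Sum>m<M n. (\<alpha> n m)\<^sup>2 / (p n m)\<^sup>2)
        + 4 / real n * (\<Sum>m<M n. p n m * (\<alpha> n m / p n m - (\<Sum>m'<M n. \<alpha> n m'))\<^sup>2))"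
  shows "bigO_P (\<lambda>n. multinomial_pmf n (M n) (p n))
     (\<lambda>n N. \<Sum>m<M n. \<alpha> n m * (real (N m * (N m - 1)) / (real n * (real n - 1) * (p n m)\<^sup>2) - 1))
     (\<lambda>n. s n + (\<Sum>m<M n. \<bar>\<alpha> n m\<bar>) / sqrt (real n))"
proof (rule bigO_P_of_second_moment_bound[where K = 2])
  define T where "T n = 2 / (real n)\<^sup>2 * (\<Sum>m<M n. (\<alpha> n m)\<^sup>2 / (p n m)\<^sup>2)
      + 4 / real n * (\<Sum>m<M n. p n m * (\<alpha> n m / p n m - (\<Sum>m'<M n. \<alpha> n m'))\<^sup>2)" for n
  have "T n \<ge> 0" for n
    unfolding T_def using p_nonneg by (intro add_nonneg_nonneg mult_nonneg_nonneg sum_nonneg) auto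
  then have s_squared: "(s n)\<^sup>2 = T n" and "s n \<ge> 0" for n
    by (simp_all add: s_def T_def)
  then show "s n + (\<Sum>m<M n. \<bar>\<alpha> n m\<bar>) / sqrt (real n) \<ge> 0" for n
    by (simp add: sum_nonneg)
  have s_le: "(s n)\<^sup>2 \<le> (s n + (\<Sum>m<M n. \<bar>\<alpha> n m\<bar>) / sqrt (real n))\<^sup>2" for n
    using \<open>s n \<ge> 0\<close> by (intro power_mono) (simp_all add: sum_nonneg)
  show "finite (set_pmf (multinomial_pmf n (M n) (p n)))" for n
    by (rule finite_set_pmf_multinomial_pmf[OF p_nonneg p_sum])
  show "\<forall>\<^sub>F n in sequentially. measure_pmf.expectation (multinomial_pmf n (M n) (p n))
      (\<lambda>N. (\<Sum>m<M n. \<alpha> n m * (real (N m * (N m - 1)) / (real n * (real n - 1) * (p n m)\<^sup>2) - 1))\<^sup>2)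
    \<le> 2 * (s n + (\<Sum>m<M n. \<bar>\<alpha> n m\<bar>) / sqrt (real n))\<^sup>2"
    using eventually_ge_at_top[of 2] eventually_pos_of_liminf_mult_Min[OF min_p]
  proof eventually_elim
    case (elim n)
    then show ?case
      using expectation_multinomial_statistic_squared_le[OF p_nonneg[where n = n] p_sum[of n],
          where \<alpha> = "\<alpha> n" and n = n, folded T_def] s_squared[of n] s_le[of n]
      by simp
  qed
qed simp

end
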